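(* Let $a\in\mathbb{R}$, $\epsilon>0$, $m\ge1$, and let $a_j,b_j\in\mathbb{C}$ with $\Re(b_j)>a$, $j=1,\dots,m$. Let $f$ be a smooth compactly supported function on $\mathbb{R}$ with support in $[\epsilon,\infty)$, and define $$I(t)=\int_\epsilon^\infty\mathrm{d}w\,f(w)\int_{\Gamma_a}\mathrm{d}z\,\mathrm{e}^{\frac12z^2t}\mathrm{e}^{zw}\prod_{j=1}^m\frac{z+a_j}{z-b_j}.$$ Then there is a constant $c$ (independent of $t$ and of the $a_j,b_j$) such that, uniformly in $0<t\le1$, $$|I(t)|\le c\prod_{j=1}^m(1+|a_j|+|b_j|),\qquad\text{and}\qquad\lim_{t\to0}I(t)=0.$$
   Context: $\Gamma_a=\{a+\mathrm{i}\varphi:\varphi\in\mathbb{R}\}$, upward oriented, with the integral including the factor $1/(2\pi\mathrm{i})$. *)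

theory Defs
  imports "HOL-Analysis.Analysis"
begin

definition smooth_real :: "(real \<Rightarrow> real) \<Rightarrow> bool" where
  "smooth_real f \<longleftrightarrow> (\<forall>k. ((deriv ^^ k) f) differentiable_on UNIV)"

definition supp_real :: "(real \<Rightarrow> real) \<Rightarrow> real set" where
  "supp_real f = closure {x. f x \<noteq> 0}"

text \<open>Integral over the upward oriented vertical line Gamma_a = {a + i phi},
  including the factor 1/(2 pi i); parametrised z = a + i phi, dz = i dphi.\<close>
definition Gamma_integral :: "real \<Rightarrow> (complex \<Rightarrow> complex) \<Rightarrow> complex" where
  "Gamma_integral a g = (1 / (2 * of_real pi * \<i>)) * (LBINT \<phi>. g (Complex a \<phi>) * \<i>)"

definition I_fun :: "(real \<Rightarrow> real) \<Rightarrow> real \<Rightarrow> real \<Rightarrow> nat \<Rightarrow> (nat \<Rightarrow> complex)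
    \<Rightarrow> (nat \<Rightarrow> complex) \<Rightarrow> real \<Rightarrow> complex" where
  "I_fun f \<epsilon> a m aa bb t =
     (LBINT w:{\<epsilon>..}. of_real (f w) *
        Gamma_integral a (\<lambda>z. exp (z\<^sup>2 * of_real t / 2) * exp (z * of_real w) *
            (\<Prod>j=1..m. (z + aa j) / (z - bb j))))"

end

theory Submission
  imports Defs "HOL-Complex_Analysis.Complex_Analysis" "HOL-Probability.Distributions"
begin

(*
  For fixed w >= eps and 0 < t <= 1 the inner integrand is holomorphic to the left of the poles
  b_j and, thanks to the factor exp(z^2 t/2), decays like a Gaussian along horizontal lines, so
  Cauchy's theorem on rectangles moves Gamma_a to the line Re z = c = -(w/t + |a| + 1). There
  |z - b_j| >= 1, so each factor (z + a_j)/(z - b_j) is bounded by 1 + |a_j| + |b_j|, while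
  |exp(z^2 t/2 + z w)| = exp(c^2 t/2 + c w - phi^2 t/2) integrates (with the factor 1/(2 pi)) to
  exp((|a| + 1)^2 t/2) times the centred normal density of variance t at w. That density is
  at most its value at eps, which is bounded by 1/eps and tends to 0 as t -> 0.
*)

lemma tendsto_set_integral_symmetric_at_top:
  fixes f :: "real \<Rightarrow> 'a::{banach, second_countable_topology}"
  assumes "integrable lborel f"
  shows "((\<lambda>T. LINT x:{-T..T}|lborel. f x) \<longlongrightarrow> (LBINT x. f x)) at_top"
  unfolding set_lebesgue_integral_def
proof (rule integral_dominated_convergence_at_top[where w="\<lambda>x. norm (f x)"])
  show "(\<lambda>x. indicator {-T..T} x *\<^sub>R f x) \<in> borel_measurable lborel" for T
    using integrable_mult_indicator[OF _ assms, of "{-T..T}"] by auto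
  show "f \<in> borel_measurable lborel" "integrable lborel (\<lambda>x. norm (f x))"
    using assms by auto
  show "AE x in lborel. ((\<lambda>T. indicator {-T..T} x *\<^sub>R f x) \<longlongrightarrow> f x) at_top"
  proof (intro AE_I2 tendsto_eventually)
    show "\<forall>\<^sub>F T in at_top. indicator {-T..T} x *\<^sub>R f x = f x" for x
      using eventually_ge_at_top[of "\<bar>x\<bar>"] by eventually_elim (auto simp: indicator_def)
  qed
  show "\<forall>\<^sub>F T in at_top. AE x in lborel. norm (indicator {-T..T} x *\<^sub>R f x) \<le> norm (f x)"
    by (intro always_eventually allI AE_I2) (auto simp: indicator_def)
qed

lemma set_integral_vertical_eq_contour_integral:
  fixes h :: "complex \<Rightarrow> complex"
  assumes cont: "continuous_on (closed_segment (Complex s (-T)) (Complex s T)) h" and "0 < T"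
  shows "(LINT \<phi>:{-T..T}|lborel. h (Complex s \<phi>)) =
           -\<i> * contour_integral (linepath (Complex s (-T)) (Complex s T)) h"
proof -
  have "(h has_contour_integral contour_integral (linepath (Complex s (-T)) (Complex s T)) h)
          (linepath (Complex s (-T)) (Complex s T))"
    using cont by (intro has_contour_integral_integral contour_integrable_continuous_linepath)
  then have "((\<lambda>\<phi>. h (Complex s \<phi>)) has_integral
               -\<i> * contour_integral (linepath (Complex s (-T)) (Complex s T)) h) {-T..T}"
    using \<open>0 < T\<close> by (subst (asm) has_contour_integral_linepath_same_Re_iff) auto
  moreover have "set_integrable lborel {-T..T} (\<lambda>\<phi>. h (Complex s \<phi>))"
  proof -
    have "Complex s ` {-T..T} \<subseteq> closed_segment (Complex s (-T)) (Complex s T)"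
      using \<open>0 < T\<close> by (auto simp: closed_segment_same_Re closed_segment_eq_real_ivl)
    then have "continuous_on {-T..T} (\<lambda>\<phi>. h (Complex s \<phi>))"
      by (intro continuous_on_compose2[OF cont]) (auto simp: Complex_eq intro!: continuous_intros)
    then show ?thesis
      unfolding set_integrable_def by (intro borel_integrable_compact) auto
  qed
  ultimately show ?thesis
    by (simp add: set_borel_integral_eq_integral(2) integral_unique)
qed

lemma norm_contour_integral_horizontal_le:
  assumes "(h has_contour_integral J) (linepath (Complex x0 y) (Complex x1 y))" and "0 \<le> B"
    and "\<And>x. x \<in> closed_segment x0 x1 \<Longrightarrow> norm (h (Complex x y)) \<le> B"
  shows "norm J \<le> B * \<bar>x1 - x0\<bar>"
proof -
  have "norm J \<le> B * norm (Complex x1 y - Complex x0 y)"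
  proof (rule has_contour_integral_bound_linepath[OF assms(1,2)])
    fix z assume "z \<in> closed_segment (Complex x0 y) (Complex x1 y)"
    then have "Im z = y" "Re z \<in> closed_segment x0 x1"
      by (auto simp: closed_segment_same_Im)
    then show "norm (h z) \<le> B"
      using assms(3)[of "Re z"] by (metis complex.collapse)
  qed
  then show ?thesis by (simp add: cmod_def)
qed

lemma has_contour_integral_linepath_convex:
  assumes "h holomorphic_on S" and "convex S" and "p \<in> S" and "q \<in> S"
  shows "(h has_contour_integral contour_integral (linepath p q) h) (linepath p q)"
proof -
  have "closed_segment p q \<subseteq> S"
    using assms(3,4,2) by (rule closed_segment_subset)
  then show ?thesis
    using holomorphic_on_imp_continuous_on[OF assms(1)]
    by (intro has_contour_integral_integral contour_integrable_continuous_linepath)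
       (rule continuous_on_subset)
qed

lemma contour_integral_quadrilateral:
  assumes hol: "h holomorphic_on S" and cvx: "convex S"
    and corners: "p1 \<in> S" "p2 \<in> S" "p3 \<in> S" "p4 \<in> S"
  shows "contour_integral (linepath p2 p3) h - contour_integral (linepath p1 p4) h =
           - (contour_integral (linepath p1 p2) h + contour_integral (linepath p3 p4) h)"
proof -
  define J12 J23 J34 J14 where "J12 = contour_integral (linepath p1 p2) h"
    and "J23 = contour_integral (linepath p2 p3) h" and "J34 = contour_integral (linepath p3 p4) h"
    and "J14 = contour_integral (linepath p1 p4) h"
  have J12: "(h has_contour_integral J12) (linepath p1 p2)"
    and J23: "(h has_contour_integral J23) (linepath p2 p3)"
    and J34: "(h has_contour_integral J34) (linepath p3 p4)"
    and J14: "(h has_contour_integral J14) (linepath p1 p4)"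
    unfolding J12_def J23_def J34_def J14_def
    using has_contour_integral_linepath_convex[OF hol cvx] corners by auto
  have J41: "(h has_contour_integral (-J14)) (linepath p4 p1)"
    using has_contour_integral_reversepath[OF valid_path_linepath J14] by simp
  define \<gamma> where "\<gamma> = linepath p1 p2 +++ (linepath p2 p3 +++ (linepath p3 p4 +++ linepath p4 p1))"
  have "(h has_contour_integral (J12 + (J23 + (J34 + -J14)))) \<gamma>"
    unfolding \<gamma>_def by (intro has_contour_integral_join J12 J23 J34 J41 valid_path_join) auto
  moreover have "(h has_contour_integral 0) \<gamma>"
  proof (rule Cauchy_theorem_convex_simple[OF hol cvx])
    show "valid_path \<gamma>" "pathfinish \<gamma> = pathstart \<gamma>"
      unfolding \<gamma>_def by (auto intro!: valid_path_join)
    show "path_image \<gamma> \<subseteq> S"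
      unfolding \<gamma>_def using corners closed_segment_subset[OF _ _ cvx] by (auto simp: path_image_join)
  qed
  ultimately show ?thesis
    unfolding J12_def [symmetric] J23_def [symmetric] J34_def [symmetric] J14_def [symmetric]
    using has_contour_integral_unique by (fastforce simp: algebra_simps)
qed

lemma norm_diff_vertical_contour_integrals_le:
  fixes h :: "complex \<Rightarrow> complex"
  assumes hol: "h holomorphic_on S" and cvx: "convex S"
    and strip: "{z. c \<le> Re z \<and> Re z \<le> a} \<subseteq> S" and "c \<le> a"
    and bound: "\<And>x. x \<in> {c..a} \<Longrightarrow> norm (h (Complex x T)) \<le> B \<and> norm (h (Complex x (-T))) \<le> B"
  shows "norm (contour_integral (linepath (Complex a (-T)) (Complex a T)) h -
               contour_integral (linepath (Complex c (-T)) (Complex c T)) h) \<le> 2 * (a - c) * B"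
proof -
  define p1 p2 p3 p4 where "p1 = Complex c (-T)" and "p2 = Complex a (-T)"
    and "p3 = Complex a T" and "p4 = Complex c T"
  have corners: "p1 \<in> S" "p2 \<in> S" "p3 \<in> S" "p4 \<in> S"
    using strip \<open>c \<le> a\<close> by (auto simp: p1_def p2_def p3_def p4_def)
  have "0 \<le> B"
    using bound[of c] \<open>c \<le> a\<close> by (meson atLeastAtMost_iff norm_ge_zero order.refl order_trans)
  have segment: "x \<in> {c..a}" if "x \<in> closed_segment c a \<or> x \<in> closed_segment a c" for x
    using that \<open>c \<le> a\<close> by (auto simp: closed_segment_eq_real_ivl split: if_splits)
  have "norm (contour_integral (linepath p1 p2) h) \<le> B * \<bar>a - c\<bar>"
    unfolding p1_def p2_def
  proof (rule norm_contour_integral_horizontal_le[OF _ \<open>0 \<le> B\<close>])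
    show "(h has_contour_integral contour_integral (linepath (Complex c (-T)) (Complex a (-T))) h)
            (linepath (Complex c (-T)) (Complex a (-T)))"
      using has_contour_integral_linepath_convex[OF hol cvx corners(1,2)] by (simp add: p1_def p2_def)
  qed (use bound segment in blast)
  moreover have "norm (contour_integral (linepath p3 p4) h) \<le> B * \<bar>c - a\<bar>"
    unfolding p3_def p4_def
  proof (rule norm_contour_integral_horizontal_le[OF _ \<open>0 \<le> B\<close>])
    show "(h has_contour_integral contour_integral (linepath (Complex a T) (Complex c T)) h)
            (linepath (Complex a T) (Complex c T))"
      using has_contour_integral_linepath_convex[OF hol cvx corners(3,4)] by (simp add: p3_def p4_def)
  qed (use bound segment in blast)
  moreover have "norm (contour_integral (linepath p2 p3) h - contour_integral (linepath p1 p4) h)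
                   \<le> norm (contour_integral (linepath p1 p2) h) + norm (contour_integral (linepath p3 p4) h)"
    unfolding contour_integral_quadrilateral[OF hol cvx corners] norm_minus_cancel
    by (rule norm_triangle_ineq)
  ultimately show ?thesis
    unfolding p1_def p2_def p3_def p4_def using \<open>c \<le> a\<close> by (simp add: algebra_simps)
qed

lemma integral_vertical_line_shift:
  fixes h :: "complex \<Rightarrow> complex" and B :: "real \<Rightarrow> real"
  assumes hol: "h holomorphic_on S" and cvx: "convex S"
    and strip: "{z. c \<le> Re z \<and> Re z \<le> a} \<subseteq> S" and "c \<le> a"
    and int_a: "integrable lborel (\<lambda>\<phi>. h (Complex a \<phi>))"
    and int_c: "integrable lborel (\<lambda>\<phi>. h (Complex c \<phi>))"
    and "(B \<longlongrightarrow> 0) at_top"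
    and "\<forall>\<^sub>F T in at_top. \<forall>x\<in>{c..a}. norm (h (Complex x T)) \<le> B T \<and> norm (h (Complex x (-T))) \<le> B T"
  shows "(LBINT \<phi>. h (Complex a \<phi>)) = (LBINT \<phi>. h (Complex c \<phi>))"
proof -
  define V where "V s T = contour_integral (linepath (Complex s (-T)) (Complex s T)) h" for s T
  have truncated: "(LINT \<phi>:{-T..T}|lborel. h (Complex s \<phi>)) = -\<i> * V s T"
    if "s \<in> {c..a}" "0 < T" for s T
  proof -
    have "closed_segment (Complex s (-T)) (Complex s T) \<subseteq> S"
      using that strip by (auto simp: closed_segment_same_Re)
    then show ?thesis
      unfolding V_def using holomorphic_on_imp_continuous_on[OF hol] \<open>0 < T\<close>
      by (intro set_integral_vertical_eq_contour_integral) (auto intro: continuous_on_subset)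
  qed
  have "((\<lambda>T. -\<i> * (V a T - V c T)) \<longlongrightarrow> (LBINT \<phi>. h (Complex a \<phi>)) - (LBINT \<phi>. h (Complex c \<phi>)))
          at_top"
  proof (rule Lim_transform_eventually)
    show "((\<lambda>T. (LINT \<phi>:{-T..T}|lborel. h (Complex a \<phi>)) - (LINT \<phi>:{-T..T}|lborel. h (Complex c \<phi>)))
            \<longlongrightarrow> (LBINT \<phi>. h (Complex a \<phi>)) - (LBINT \<phi>. h (Complex c \<phi>))) at_top"
      by (intro tendsto_diff tendsto_set_integral_symmetric_at_top int_a int_c)
    show "\<forall>\<^sub>F T in at_top. (LINT \<phi>:{-T..T}|lborel. h (Complex a \<phi>))
            - (LINT \<phi>:{-T..T}|lborel. h (Complex c \<phi>)) = -\<i> * (V a T - V c T)"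
      using eventually_gt_at_top[of 0]
      by eventually_elim (use \<open>c \<le> a\<close> in \<open>simp add: truncated algebra_simps\<close>)
  qed
  moreover have "((\<lambda>T. -\<i> * (V a T - V c T)) \<longlongrightarrow> 0) at_top"
  proof (rule Lim_null_comparison)
    show "\<forall>\<^sub>F T in at_top. norm (-\<i> * (V a T - V c T)) \<le> 2 * (a - c) * B T"
      using assms(8)
    proof eventually_elim
      case (elim T)
      then have "norm (V a T - V c T) \<le> 2 * (a - c) * B T"
        unfolding V_def by (intro norm_diff_vertical_contour_integrals_le[OF hol cvx strip \<open>c \<le> a\<close>]) auto
      then show ?case by (simp add: norm_mult)
    qed
    show "((\<lambda>T. 2 * (a - c) * B T) \<longlongrightarrow> 0) at_top"
      using tendsto_mult_left[OF assms(7), of "2 * (a - c)"] by simp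
  qed
  ultimately show ?thesis
    using tendsto_unique[OF trivial_limit_at_top_linorder] by fastforce
qed

lemma norm_Gamma_integral_le_shifted:
  fixes h :: "complex \<Rightarrow> complex" and B :: "real \<Rightarrow> real"
  assumes "h holomorphic_on S" and "convex S"
    and "{z. c \<le> Re z \<and> Re z \<le> a} \<subseteq> S" and "c \<le> a"
    and "integrable lborel (\<lambda>\<phi>. h (Complex c \<phi>))"
    and "(B \<longlongrightarrow> 0) at_top"
    and "\<forall>\<^sub>F T in at_top. \<forall>x\<in>{c..a}. norm (h (Complex x T)) \<le> B T \<and> norm (h (Complex x (-T))) \<le> B T"
  shows "norm (Gamma_integral a h) \<le> norm (LBINT \<phi>. h (Complex c \<phi>)) / (2 * pi)"
proof -
  have Gamma: "Gamma_integral a h = (LBINT \<phi>. h (Complex a \<phi>)) / (2 * pi)"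
    unfolding Gamma_integral_def by (simp add: field_simps)
  show ?thesis
  proof (cases "integrable lborel (\<lambda>\<phi>. h (Complex a \<phi>))")
    case True
    then show ?thesis
      unfolding Gamma using integral_vertical_line_shift[OF assms(1-4) True assms(5-7)]
      by (simp add: norm_divide)
  qed (simp add: Gamma not_integrable_integral_eq)
qed

definition I_integrand :: "real \<Rightarrow> real \<Rightarrow> nat \<Rightarrow> (nat \<Rightarrow> complex) \<Rightarrow> (nat \<Rightarrow> complex)
    \<Rightarrow> complex \<Rightarrow> complex" where
  "I_integrand t w m aa bb z =
     exp (z\<^sup>2 * of_real t / 2) * exp (z * of_real w) * (\<Prod>j=1..m. (z + aa j) / (z - bb j))"

lemma norm_ratio_le:
  fixes z a b :: complex
  assumes "1 \<le> norm (z - b)"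
  shows "norm ((z + a) / (z - b)) \<le> 1 + norm a + norm b"
proof -
  have "norm (z + a) \<le> norm (z - b) + norm a + norm b"
    using norm_triangle_ineq[of "z - b" "a + b"] norm_triangle_ineq[of a b] by (simp add: algebra_simps)
  also have "\<dots> \<le> norm (z - b) * (1 + norm a + norm b)"
    using assms mult_left_mono[of 1 "norm (z - b)" "norm a + norm b"] by (simp add: algebra_simps)
  finally show ?thesis
    using assms by (simp add: norm_divide divide_le_eq mult.commute)
qed

lemma norm_I_integrand_le:
  assumes "\<And>j. j \<in> {1..m} \<Longrightarrow> 1 \<le> norm (z - bb j)"
  shows "norm (I_integrand t w m aa bb z)
           \<le> (\<Prod>j=1..m. 1 + norm (aa j) + norm (bb j)) * exp ((Re z ^ 2 - Im z ^ 2) * t / 2 + Re z * w)"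
proof -
  have "norm (\<Prod>j=1..m. (z + aa j) / (z - bb j)) \<le> (\<Prod>j=1..m. 1 + norm (aa j) + norm (bb j))"
    unfolding prod_norm[symmetric] by (intro prod_mono conjI norm_ratio_le assms) auto
  moreover have "norm (exp (z\<^sup>2 * of_real t / 2) * exp (z * of_real w))
                   = exp ((Re z ^ 2 - Im z ^ 2) * t / 2 + Re z * w)"
    by (simp add: norm_mult norm_exp_eq_Re power2_eq_square exp_add algebra_simps)
  ultimately show ?thesis
    unfolding I_integrand_def norm_mult by (simp add: mult_right_mono mult.commute)
qed

lemma continuous_on_I_integrand_vertical:
  assumes "\<forall>j\<in>{1..m}. s \<noteq> Re (bb j)"
  shows "continuous_on UNIV (\<lambda>\<phi>. I_integrand t w m aa bb (Complex s \<phi>))"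
  unfolding I_integrand_def Complex_eq using assms
  by (intro continuous_intros) (auto simp: complex_eq_iff)

lemma has_bochner_integral_exp_neg_square:
  fixes t :: real
  assumes "0 < t"
  shows "has_bochner_integral lborel (\<lambda>\<phi>. exp (- (\<phi>\<^sup>2 * t / 2))) (sqrt (2 * pi / t))"
proof -
  have "exp (- (\<phi>\<^sup>2 * t / 2)) = sqrt (2 * pi / t) * normal_density 0 (1 / sqrt t) \<phi>" for \<phi>
    using assms by (simp add: normal_density_def power_divide real_sqrt_divide field_simps)
  moreover have "has_bochner_integral lborel (normal_density 0 (1 / sqrt t)) 1"
    using assms by (simp add: has_bochner_integral_iff)
  ultimately show ?thesis
    using has_bochner_integral_mult_right[of "sqrt (2 * pi / t)" lborel "normal_density 0 (1 / sqrt t)" 1]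
    by simp
qed

lemma norm_integral_I_integrand_vertical_le:
  fixes c t w :: real and aa bb :: "nat \<Rightarrow> complex"
  assumes "0 < t" and bb: "\<forall>j\<in>{1..m}. c + 1 \<le> Re (bb j)"
  defines "P \<equiv> (\<Prod>j=1..m. 1 + norm (aa j) + norm (bb j))"
  shows "integrable lborel (\<lambda>\<phi>. I_integrand t w m aa bb (Complex c \<phi>))"
    and "norm (LBINT \<phi>. I_integrand t w m aa bb (Complex c \<phi>))
           \<le> P * exp (c\<^sup>2 * t / 2 + c * w) * sqrt (2 * pi / t)"
proof -
  have bound: "norm (I_integrand t w m aa bb (Complex c \<phi>))
                 \<le> P * exp (c\<^sup>2 * t / 2 + c * w) * exp (- (\<phi>\<^sup>2 * t / 2))" for \<phi>
  proof -
    have "1 \<le> norm (Complex c \<phi> - bb j)" if "j \<in> {1..m}" for j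
      using bb that abs_Re_le_cmod[of "Complex c \<phi> - bb j"] by force
    then have "norm (I_integrand t w m aa bb (Complex c \<phi>))
                 \<le> P * exp ((c ^ 2 - \<phi> ^ 2) * t / 2 + c * w)"
      unfolding P_def using norm_I_integrand_le[where z = "Complex c \<phi>" and t = t and w = w and aa = aa]
      by simp
    also have "exp ((c ^ 2 - \<phi> ^ 2) * t / 2 + c * w) = exp (c\<^sup>2 * t / 2 + c * w) * exp (- (\<phi>\<^sup>2 * t / 2))"
      by (simp add: exp_add[symmetric] field_simps)
    finally show ?thesis by (simp add: mult.assoc)
  qed
  have gauss: "has_bochner_integral lborel (\<lambda>\<phi>. P * exp (c\<^sup>2 * t / 2 + c * w) * exp (- (\<phi>\<^sup>2 * t / 2)))
                 (P * exp (c\<^sup>2 * t / 2 + c * w) * sqrt (2 * pi / t))"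
    using \<open>0 < t\<close> by (intro has_bochner_integral_mult_right has_bochner_integral_exp_neg_square)
  have "continuous_on UNIV (\<lambda>\<phi>. I_integrand t w m aa bb (Complex c \<phi>))"
    using bb by (intro continuous_on_I_integrand_vertical) force
  then have "(\<lambda>\<phi>. I_integrand t w m aa bb (Complex c \<phi>)) \<in> borel_measurable lborel"
    using borel_measurable_continuous_onI by simp
  then show int: "integrable lborel (\<lambda>\<phi>. I_integrand t w m aa bb (Complex c \<phi>))"
    by (rule Bochner_Integration.integrable_bound[OF integrable.intros[OF gauss]])
       (intro AE_I2 order_trans[OF bound], simp)
  have "norm (LBINT \<phi>. I_integrand t w m aa bb (Complex c \<phi>))
          \<le> (LBINT \<phi>. norm (I_integrand t w m aa bb (Complex c \<phi>)))"
    by (rule integral_norm_bound)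
  also have "\<dots> \<le> (LBINT \<phi>. P * exp (c\<^sup>2 * t / 2 + c * w) * exp (- (\<phi>\<^sup>2 * t / 2)))"
    using bound by (intro integral_mono integrable_norm int integrable.intros[OF gauss])
  also have "\<dots> = P * exp (c\<^sup>2 * t / 2 + c * w) * sqrt (2 * pi / t)"
    by (rule has_bochner_integral_integral_eq[OF gauss])
  finally show "norm (LBINT \<phi>. I_integrand t w m aa bb (Complex c \<phi>))
                  \<le> P * exp (c\<^sup>2 * t / 2 + c * w) * sqrt (2 * pi / t)" .
qed

lemma norm_I_integrand_horizontal_le:
  fixes x y X T t w :: real
  assumes "0 \<le> t" and "\<bar>x\<bar> \<le> X" and "\<bar>y\<bar> = T" and T: "1 + (\<Sum>j=1..m. norm (bb j)) \<le> T"
  shows "norm (I_integrand t w m aa bb (Complex x y))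
           \<le> (\<Prod>j=1..m. 1 + norm (aa j) + norm (bb j)) * exp (X\<^sup>2 * t / 2 + X * \<bar>w\<bar>) * exp (- (T\<^sup>2 * t / 2))"
proof -
  have "1 \<le> norm (Complex x y - bb j)" if "j \<in> {1..m}" for j
  proof -
    have "norm (bb j) \<le> (\<Sum>j=1..m. norm (bb j))"
      using that by (intro member_le_sum) auto
    moreover have "\<bar>y\<bar> - \<bar>Im (bb j)\<bar> \<le> \<bar>Im (Complex x y - bb j)\<bar>"
      using abs_triangle_ineq2[of y "Im (bb j)"] by simp
    ultimately have "1 \<le> \<bar>Im (Complex x y - bb j)\<bar>"
      using T \<open>\<bar>y\<bar> = T\<close> abs_Im_le_cmod[of "bb j"] by linarith
    also have "\<dots> \<le> norm (Complex x y - bb j)" by (rule abs_Im_le_cmod)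
    finally show ?thesis .
  qed
  then have "norm (I_integrand t w m aa bb (Complex x y))
               \<le> (\<Prod>j=1..m. 1 + norm (aa j) + norm (bb j)) * exp ((x ^ 2 - y ^ 2) * t / 2 + x * w)"
    using norm_I_integrand_le[where z = "Complex x y" and t = t and w = w and aa = aa] by simp
  also have "\<dots> \<le> (\<Prod>j=1..m. 1 + norm (aa j) + norm (bb j)) * exp (X\<^sup>2 * t / 2 + X * \<bar>w\<bar> - T\<^sup>2 * t / 2)"
  proof (intro mult_left_mono prod_nonneg)
    have "x ^ 2 * t \<le> X ^ 2 * t"
      using assms by (intro mult_right_mono) (auto simp flip: abs_le_square_iff)
    moreover have "x * w \<le> X * \<bar>w\<bar>"
    proof -
      have "x * w \<le> \<bar>x\<bar> * \<bar>w\<bar>" by (metis abs_ge_self abs_mult)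
      also have "\<dots> \<le> X * \<bar>w\<bar>" using assms by (intro mult_right_mono) auto
      finally show ?thesis .
    qed
    moreover have "y ^ 2 = T ^ 2"
      unfolding \<open>\<bar>y\<bar> = T\<close>[symmetric] by simp
    then have "(x ^ 2 - y ^ 2) * t / 2 + x * w = x ^ 2 * t / 2 - T ^ 2 * t / 2 + x * w"
      by (simp add: left_diff_distrib diff_divide_distrib)
    ultimately show "exp ((x ^ 2 - y ^ 2) * t / 2 + x * w) \<le> exp (X\<^sup>2 * t / 2 + X * \<bar>w\<bar> - T\<^sup>2 * t / 2)"
      unfolding exp_le_cancel_iff by linarith
  qed (auto intro: add_nonneg_nonneg)
  finally show ?thesis
    unfolding diff_conv_add_uminus exp_add by (simp add: mult.assoc)
qed

lemma sqrt_divide_div_self: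
  fixes x t :: real
  assumes "0 < x" and "0 < t"
  shows "sqrt (x / t) / x = 1 / sqrt (x * t)"
proof -
  have square: "x / t * (x * t) = x\<^sup>2"
    using assms by (simp add: field_simps power2_eq_square)
  have "sqrt (x / t) * sqrt (x * t) = x"
    unfolding real_sqrt_mult[symmetric] square real_sqrt_abs using assms by simp
  moreover have "0 < sqrt (x * t)"
    using assms by simp
  ultimately have "sqrt (x / t) = x / sqrt (x * t)"
    by (simp add: eq_divide_eq)
  then show ?thesis
    using assms by simp
qed

lemma norm_Gamma_integral_I_integrand_le:
  fixes a c t w :: real and aa bb :: "nat \<Rightarrow> complex"
  assumes "0 < t" and "c \<le> a - 1" and bb: "\<forall>j\<in>{1..m}. a < Re (bb j)"
  shows "norm (Gamma_integral a (I_integrand t w m aa bb))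
           \<le> (\<Prod>j=1..m. 1 + norm (aa j) + norm (bb j)) * exp (c\<^sup>2 * t / 2 + c * w) / sqrt (2 * pi * t)"
proof -
  define P where "P = (\<Prod>j=1..m. 1 + norm (aa j) + norm (bb j))"
  define S where "S = (\<Inter>j\<in>{1..m}. {z. Re z < Re (bb j)})"
  define X where "X = \<bar>a\<bar> + \<bar>c\<bar>"
  define B where "B T = P * exp (X\<^sup>2 * t / 2 + X * \<bar>w\<bar>) * exp (- (T\<^sup>2 * t / 2))" for T
  have left_of_poles: "\<forall>j\<in>{1..m}. c + 1 \<le> Re (bb j)"
    using bb \<open>c \<le> a - 1\<close> by force
  have "z - bb j \<noteq> 0" if "z \<in> S" "j \<in> {1..m}" for z j
    using that by (auto simp: S_def)
  then have "I_integrand t w m aa bb holomorphic_on S"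
    unfolding I_integrand_def by (intro holomorphic_intros) auto
  moreover have "convex S"
    unfolding S_def by (intro convex_INT ballI convex_halfspace_Re_lt)
  moreover have "{z. c \<le> Re z \<and> Re z \<le> a} \<subseteq> S"
    using bb by (force simp: S_def)
  moreover have "(B \<longlongrightarrow> 0) at_top"
    unfolding B_def using \<open>0 < t\<close> by real_asymp
  moreover have "\<forall>\<^sub>F T in at_top. \<forall>x\<in>{c..a}. norm (I_integrand t w m aa bb (Complex x T)) \<le> B T
                   \<and> norm (I_integrand t w m aa bb (Complex x (-T))) \<le> B T"
    using eventually_ge_at_top[of "1 + (\<Sum>j=1..m. norm (bb j))"]
  proof eventually_elim
    case (elim T)
    moreover have "0 \<le> T"
      using elim sum_nonneg[of "{1..m}" "\<lambda>j. norm (bb j)"] by simp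
    ultimately show ?case
      unfolding B_def P_def X_def using \<open>0 < t\<close>
      by (intro ballI conjI norm_I_integrand_horizontal_le) auto
  qed
  ultimately have "norm (Gamma_integral a (I_integrand t w m aa bb))
                     \<le> norm (LBINT \<phi>. I_integrand t w m aa bb (Complex c \<phi>)) / (2 * pi)"
    using \<open>c \<le> a - 1\<close> norm_integral_I_integrand_vertical_le(1)[OF \<open>0 < t\<close> left_of_poles]
    by (intro norm_Gamma_integral_le_shifted) auto
  also have "\<dots> \<le> P * exp (c\<^sup>2 * t / 2 + c * w) * sqrt (2 * pi / t) / (2 * pi)"
    using norm_integral_I_integrand_vertical_le(2)[OF \<open>0 < t\<close> left_of_poles]
    unfolding P_def by (intro divide_right_mono) auto
  also have "\<dots> = P * exp (c\<^sup>2 * t / 2 + c * w) * (sqrt (2 * pi / t) / (2 * pi))"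
    by simp
  also have "sqrt (2 * pi / t) / (2 * pi) = 1 / sqrt (2 * pi * t)"
    using \<open>0 < t\<close> by (intro sqrt_divide_div_self) auto
  finally show ?thesis
    unfolding P_def by simp
qed

lemma norm_Gamma_integral_I_integrand_le_normal_density:
  fixes a t w :: real and aa bb :: "nat \<Rightarrow> complex"
  assumes "0 < t" and "t \<le> 1" and "0 \<le> w" and bb: "\<forall>j\<in>{1..m}. a < Re (bb j)"
  shows "norm (Gamma_integral a (I_integrand t w m aa bb))
           \<le> (\<Prod>j=1..m. 1 + norm (aa j) + norm (bb j)) * exp ((\<bar>a\<bar> + 1)\<^sup>2 / 2)
               * normal_density 0 (sqrt t) w"
proof -
  define P where "P = (\<Prod>j=1..m. 1 + norm (aa j) + norm (bb j))"
  define A where "A = \<bar>a\<bar> + 1"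
  \<comment> \<open>The minimiser \<open>-w/t\<close> of \<open>c\<^sup>2 t/2 + c w\<close> shifted so that the line stays at distance
      at least 1 to the left of every pole.\<close>
  define c where "c = - (w / t + A)"
  have "c \<le> a - 1"
    unfolding c_def A_def using assms by (smt (verit) divide_nonneg_pos)
  have "0 \<le> P"
    unfolding P_def by (intro prod_nonneg) (auto intro: add_nonneg_nonneg)
  have exponent: "c\<^sup>2 * t / 2 + c * w = A\<^sup>2 * t / 2 + - (w\<^sup>2 / (2 * t))"
    unfolding c_def using \<open>0 < t\<close> by (simp add: power2_eq_square field_simps)
  have "norm (Gamma_integral a (I_integrand t w m aa bb)) \<le> P * exp (c\<^sup>2 * t / 2 + c * w) / sqrt (2 * pi * t)"
    unfolding P_def by (rule norm_Gamma_integral_I_integrand_le[OF \<open>0 < t\<close> \<open>c \<le> a - 1\<close> bb])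
  also have "\<dots> = P * (exp (A\<^sup>2 * t / 2) * normal_density 0 (sqrt t) w)"
    unfolding exponent exp_add using \<open>0 < t\<close> by (simp add: normal_density_def)
  also have "\<dots> \<le> P * (exp (A\<^sup>2 / 2) * normal_density 0 (sqrt t) w)"
  proof -
    have "A\<^sup>2 * t \<le> A\<^sup>2"
      using \<open>t \<le> 1\<close> by (intro mult_left_le) auto
    then show ?thesis
      using \<open>0 \<le> P\<close> by (intro mult_left_mono mult_right_mono) auto
  qed
  finally show ?thesis
    unfolding P_def A_def by (simp add: mult.assoc)
qed

lemma normal_density_zero_mean_antimono:
  fixes x y \<sigma> :: real
  assumes "0 \<le> x" and "x \<le> y"
  shows "normal_density 0 \<sigma> y \<le> normal_density 0 \<sigma> x"
proof -
  have "x\<^sup>2 / (2 * \<sigma>\<^sup>2) \<le> y\<^sup>2 / (2 * \<sigma>\<^sup>2)"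
    using assms by (intro divide_right_mono power_mono) auto
  then show ?thesis
    unfolding normal_density_def by (intro mult_left_mono) simp_all
qed

lemma normal_density_le_inverse:
  fixes x \<sigma> :: real
  assumes "0 < x"
  shows "normal_density 0 \<sigma> x \<le> 1 / x"
proof (cases "\<sigma> = 0")
  case False
  define s where "s = \<sigma>\<^sup>2"
  define u where "u = x\<^sup>2 / (2 * s)"
  have "0 < s" unfolding s_def using False by simp
  then have "u \<le> exp (2 * u)"
    using exp_ge_add_one_self[of "2 * u"] unfolding u_def by (smt (verit) divide_nonneg_pos zero_le_power2)
  then have "u * exp (- (2 * u)) \<le> 1"
    by (simp add: exp_minus field_simps)
  have "exp (- u) * exp (- u) = exp (- (2 * u))"
    by (simp flip: exp_add)
  moreover have "x\<^sup>2 = 2 * s * u"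
    using \<open>0 < s\<close> by (simp add: u_def)
  moreover have "(x * exp (- u))\<^sup>2 = x\<^sup>2 * (exp (- u) * exp (- u))"
    by (simp add: power_mult_distrib power2_eq_square)
  ultimately have "(x * exp (- u))\<^sup>2 = 2 * s * (u * exp (- (2 * u)))"
    by simp
  also have "\<dots> \<le> 2 * s * 1"
    using \<open>u * exp (- (2 * u)) \<le> 1\<close> \<open>0 < s\<close> by (intro mult_left_mono) auto
  also have "\<dots> \<le> 2 * pi * s"
    using \<open>0 < s\<close> pi_ge_two by simp
  finally have "x * exp (- u) \<le> sqrt (2 * pi * s)"
    by (rule real_le_rsqrt)
  then show ?thesis
    using \<open>0 < x\<close> \<open>0 < s\<close>
    by (simp add: normal_density_def u_def s_def field_simps)
qed (use assms in \<open>simp add: normal_density_def\<close>)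

lemma tendsto_normal_density_sqrt_at_right_0:
  fixes x :: real
  assumes "0 < x"
  shows "((\<lambda>t. normal_density 0 (sqrt t) x) \<longlongrightarrow> 0) (at_right 0)"
proof (rule Lim_transform_eventually)
  show "((\<lambda>t. exp (- (x\<^sup>2 / (2 * t))) / sqrt (2 * pi * t)) \<longlongrightarrow> 0) (at_right 0)"
    using assms by real_asymp
  show "\<forall>\<^sub>F t in at_right 0. exp (- (x\<^sup>2 / (2 * t))) / sqrt (2 * pi * t) = normal_density 0 (sqrt t) x"
    by (intro eventually_at_right_less[THEN eventually_mono]) (simp add: normal_density_def)
qed

lemma smooth_real_imp_continuous_on: "smooth_real f \<Longrightarrow> continuous_on UNIV f"
  unfolding smooth_real_def by (metis differentiable_imp_continuous_on funpow_0)

lemma continuous_compact_support_bounds: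
  fixes f :: "real \<Rightarrow> real"
  assumes "continuous_on UNIV f" and "compact (supp_real f)" and "supp_real f \<subseteq> {\<epsilon>..}"
  obtains M R where "\<epsilon> \<le> R" and "\<forall>x. \<bar>f x\<bar> \<le> M" and "\<forall>x. x \<notin> {\<epsilon>..R} \<longrightarrow> f x = 0"
proof -
  have in_supp: "x \<in> supp_real f" if "f x \<noteq> 0" for x
    using that closure_subset[of "{x. f x \<noteq> 0}"] unfolding supp_real_def by blast
  have "compact (f ` supp_real f)"
    by (intro compact_continuous_image continuous_on_subset[OF assms(1) subset_UNIV] assms(2))
  then have "bounded (f ` supp_real f)" by (rule compact_imp_bounded)
  then obtain M where "\<forall>y\<in>f ` supp_real f. \<bar>y\<bar> \<le> M"
    unfolding bounded_real by blast
  then have M: "\<And>x. x \<in> supp_real f \<Longrightarrow> \<bar>f x\<bar> \<le> M"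
    by blast
  have "bounded (supp_real f)" using assms(2) by (rule compact_imp_bounded)
  then obtain R where R: "\<And>x. x \<in> supp_real f \<Longrightarrow> \<bar>x\<bar> \<le> R"
    unfolding bounded_real by auto
  show thesis
  proof
    show "\<epsilon> \<le> max R \<epsilon>" by simp
    show "\<forall>x. \<bar>f x\<bar> \<le> max M 0"
      using M in_supp by (metis abs_zero max.coboundedI1 max.cobounded2)
    show "\<forall>x. x \<notin> {\<epsilon>..max R \<epsilon>} \<longrightarrow> f x = 0"
    proof (intro allI impI)
      fix x assume x: "x \<notin> {\<epsilon>..max R \<epsilon>}"
      show "f x = 0"
      proof (rule ccontr)
        assume "f x \<noteq> 0"
        then have "\<epsilon> \<le> x" "\<bar>x\<bar> \<le> R" using in_supp R assms(3) by auto
        with x show False by auto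
      qed
    qed
  qed
qed

lemma norm_set_integral_Ici_le:
  fixes f :: "real \<Rightarrow> real" and G :: "real \<Rightarrow> complex"
  assumes f_bound: "\<forall>x. \<bar>f x\<bar> \<le> M" and f_zero: "\<forall>x. x \<notin> {\<epsilon>..R} \<longrightarrow> f x = 0" and "\<epsilon> \<le> R"
    and G_bound: "\<And>w. \<epsilon> \<le> w \<Longrightarrow> norm (G w) \<le> C"
  shows "norm (LBINT w:{\<epsilon>..}. of_real (f w) * G w) \<le> M * C * (R - \<epsilon>)"
proof -
  have "0 \<le> M" "0 \<le> C"
    using order_trans[OF abs_ge_zero f_bound[rule_format]] order_trans[OF norm_ge_zero G_bound[OF order_refl]]
    by auto
  have pointwise: "norm (indicator {\<epsilon>..} w *\<^sub>R (of_real (f w) * G w)) \<le> M * C * indicator {\<epsilon>..R} w" for w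
  proof (cases "w \<in> {\<epsilon>..R}")
    case True
    then have "\<bar>f w\<bar> * norm (G w) \<le> M * C"
      using f_bound G_bound \<open>0 \<le> M\<close> by (intro mult_mono) auto
    then show ?thesis using True by (simp add: norm_mult)
  qed (use f_zero in \<open>auto simp: indicator_def\<close>)
  show ?thesis
  proof (cases "set_integrable lborel {\<epsilon>..} (\<lambda>w. of_real (f w) * G w)")
    case True
    have "norm (LBINT w:{\<epsilon>..}. of_real (f w) * G w)
            \<le> (LBINT w. norm (indicator {\<epsilon>..} w *\<^sub>R (of_real (f w) * G w)))"
      unfolding set_lebesgue_integral_def by (rule integral_norm_bound)
    also have "\<dots> \<le> (LBINT w. M * C * indicator {\<epsilon>..R} w)"
      using True pointwise unfolding set_integrable_def
      by (intro integral_mono integrable_norm integrable_mult_right integrable_real_indicator)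
         (auto simp: emeasure_lborel_Icc_eq)
    also have "\<dots> = M * C * (R - \<epsilon>)"
      using \<open>\<epsilon> \<le> R\<close> by simp
    finally show ?thesis .
  next
    case False
    then show ?thesis
      using \<open>0 \<le> M\<close> \<open>0 \<le> C\<close> \<open>\<epsilon> \<le> R\<close>
      by (simp add: set_lebesgue_integral_def set_integrable_def not_integrable_integral_eq)
  qed
qed

lemma norm_I_fun_le:
  fixes f :: "real \<Rightarrow> real" and aa bb :: "nat \<Rightarrow> complex"
  assumes "0 < \<epsilon>" and f_bound: "\<forall>x. \<bar>f x\<bar> \<le> M" and f_zero: "\<forall>x. x \<notin> {\<epsilon>..R} \<longrightarrow> f x = 0"
    and "\<epsilon> \<le> R" and "0 < t" and "t \<le> 1" and bb: "\<forall>j\<in>{1..m}. a < Re (bb j)"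
  shows "norm (I_fun f \<epsilon> a m aa bb t)
           \<le> M * ((\<Prod>j=1..m. 1 + norm (aa j) + norm (bb j)) * exp ((\<bar>a\<bar> + 1)\<^sup>2 / 2)
                   * normal_density 0 (sqrt t) \<epsilon>) * (R - \<epsilon>)"
proof -
  define P where "P = (\<Prod>j=1..m. 1 + norm (aa j) + norm (bb j)) * exp ((\<bar>a\<bar> + 1)\<^sup>2 / 2)"
  have "0 \<le> P"
    unfolding P_def by (intro mult_nonneg_nonneg prod_nonneg) (auto intro: add_nonneg_nonneg)
  have "I_fun f \<epsilon> a m aa bb t = (LBINT w:{\<epsilon>..}. of_real (f w) * Gamma_integral a (I_integrand t w m aa bb))"
    unfolding I_fun_def I_integrand_def[abs_def] ..
  also have "norm \<dots> \<le> M * (P * normal_density 0 (sqrt t) \<epsilon>) * (R - \<epsilon>)"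
  proof (rule norm_set_integral_Ici_le[OF f_bound f_zero \<open>\<epsilon> \<le> R\<close>])
    fix w assume "\<epsilon> \<le> w"
    have "norm (Gamma_integral a (I_integrand t w m aa bb)) \<le> P * normal_density 0 (sqrt t) w"
      unfolding P_def using \<open>0 < t\<close> \<open>t \<le> 1\<close> \<open>0 < \<epsilon>\<close> \<open>\<epsilon> \<le> w\<close> bb
      by (intro norm_Gamma_integral_I_integrand_le_normal_density) auto
    also have "\<dots> \<le> P * normal_density 0 (sqrt t) \<epsilon>"
      using \<open>0 \<le> P\<close> \<open>0 < \<epsilon>\<close> \<open>\<epsilon> \<le> w\<close>
      by (intro mult_left_mono normal_density_zero_mean_antimono) auto
    finally show "norm (Gamma_integral a (I_integrand t w m aa bb)) \<le> P * normal_density 0 (sqrt t) \<epsilon>" .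
  qed
  finally show ?thesis
    unfolding P_def .
qed

theorem lemmaD16:
  fixes a \<epsilon> :: real and m :: nat and f :: "real \<Rightarrow> real"
  assumes "\<epsilon> > 0" and "m \<ge> 1"
    and "smooth_real f" and "compact (supp_real f)" and "supp_real f \<subseteq> {\<epsilon>..}"
  shows "\<exists>c. \<forall>aa bb :: nat \<Rightarrow> complex. (\<forall>j\<in>{1..m}. Re (bb j) > a) \<longrightarrow>
           (\<forall>t. 0 < t \<and> t \<le> 1 \<longrightarrow>
              norm (I_fun f \<epsilon> a m aa bb t) \<le> c * (\<Prod>j=1..m. 1 + norm (aa j) + norm (bb j)))
           \<and> ((I_fun f \<epsilon> a m aa bb) \<longlongrightarrow> 0) (at_right 0)"
proof -
  obtain M R where "\<epsilon> \<le> R" and f_bound: "\<forall>x. \<bar>f x\<bar> \<le> M" and f_zero: "\<forall>x. x \<notin> {\<epsilon>..R} \<longrightarrow> f x = 0"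
    by (rule continuous_compact_support_bounds[OF smooth_real_imp_continuous_on[OF assms(3)] assms(4,5)])
  define K where "K = M * exp ((\<bar>a\<bar> + 1)\<^sup>2 / 2) * (R - \<epsilon>)"
  have "0 \<le> M"
    using order_trans[OF abs_ge_zero f_bound[rule_format]] by blast
  then have "0 \<le> K"
    unfolding K_def using \<open>\<epsilon> \<le> R\<close> by simp
  show ?thesis
  proof (intro exI[of _ "K / \<epsilon>"] allI impI conjI)
    fix aa bb :: "nat \<Rightarrow> complex" and t :: real
    assume bb: "\<forall>j\<in>{1..m}. a < Re (bb j)"
    define P where "P = (\<Prod>j=1..m. 1 + norm (aa j) + norm (bb j))"
    have "0 \<le> P"
      unfolding P_def by (intro prod_nonneg) (auto intro: add_nonneg_nonneg)
    have bound: "norm (I_fun f \<epsilon> a m aa bb t) \<le> K * P * normal_density 0 (sqrt t) \<epsilon>" if "0 < t" "t \<le> 1" for t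
      using norm_I_fun_le[OF \<open>0 < \<epsilon>\<close> f_bound f_zero \<open>\<epsilon> \<le> R\<close> that bb]
      unfolding K_def P_def by (simp add: mult_ac)
    show "norm (I_fun f \<epsilon> a m aa bb t) \<le> K / \<epsilon> * P" if "0 < t \<and> t \<le> 1"
    proof -
      have "norm (I_fun f \<epsilon> a m aa bb t) \<le> K * P * normal_density 0 (sqrt t) \<epsilon>"
        using bound that by blast
      also have "\<dots> \<le> K * P * (1 / \<epsilon>)"
        using \<open>0 \<le> K\<close> \<open>0 \<le> P\<close> \<open>0 < \<epsilon>\<close>
        by (intro mult_left_mono normal_density_le_inverse) auto
      finally show ?thesis
        by simp
    qed
    show "((I_fun f \<epsilon> a m aa bb) \<longlongrightarrow> 0) (at_right 0)"
    proof (rule Lim_null_comparison)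
      show "\<forall>\<^sub>F t in at_right 0. norm (I_fun f \<epsilon> a m aa bb t) \<le> K * P * normal_density 0 (sqrt t) \<epsilon>"
        using bound by (intro eventually_at_rightI[of 0 1]) auto
      show "((\<lambda>t. K * P * normal_density 0 (sqrt t) \<epsilon>) \<longlongrightarrow> 0) (at_right 0)"
        using tendsto_mult_right_zero[OF tendsto_normal_density_sqrt_at_right_0[OF \<open>0 < \<epsilon>\<close>]] by simp
    qed
  qed
qed

end
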